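(* For a positive integer $d$, let $s(d)$ be the number of positive integers $e<d$ such that $e\mid d$ and $(e+1)\mid(d+1)$. Let $S(N)=\sum_{d=1}^N s(d)$. Then $$S(N) = N + O(N^{1/2}) \quad\text{as } N\to\infty,$$ and $\sup_{d\ge1} s(d) = \infty$.
   Context: Here $s(d)$ is the number of "neat Sylvester-type" canonical forms of degree $d$. These are representations of a general binary $d$-ic as a sum of $r$ forms of degree $e$ raised to the power $d/e$, where $r(e+1)=d+1$ and $e<d$. *)

theory Defs
  imports "HOL-Library.Landau_Symbols" Complex_Main
begin

definition s :: "nat \<Rightarrow> nat" where
  "s d = card {e :: nat. 0 < e \<and> e < d \<and> e dvd d \<and> (e + 1) dvd (d + 1)}"

definition S :: "nat \<Rightarrow> nat" where
  "S N = (\<Sum>d = 1..N. s d)"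

end

theory Submission
  imports Defs
begin

(* Call (e, d) a Sylvester pair if e < d, e divides d and e + 1 divides d + 1.
   Since e and e + 1 are coprime, for e > 0 this holds iff d = e + m e (e + 1)
   for some m > 0.  Counting S(N) by the smaller member e instead of d gives
     S(N) = sum_{e=1}^{N} floor((N - e) / (e (e + 1))).
   Each summand is at most N/(e(e+1)) and, for e <= N, at least N/(e(e+1)) - 2;
   the telescoping sum 1/(e(e+1)) then gives S(N) <= N, and truncating the sum
   at e = floor(sqrt N) gives S(N) >= N - 3 sqrt N.
   Unboundedness of s: whenever j is a proper divisor of k, e = 2^j - 1 is a
   Sylvester partner of d = 2^k - 1, so s(2^k - 1) is at least the number of
   proper divisors of k, which is n for k = 2^n. *)

definition sylvester_pair :: "nat \<Rightarrow> nat \<Rightarrow> bool" where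
  "sylvester_pair e d \<longleftrightarrow> e < d \<and> e dvd d \<and> (e + 1) dvd (d + 1)"

lemma s_eq_card_partners: "s d = card {e. 0 < e \<and> sylvester_pair e d}"
  unfolding s_def sylvester_pair_def by (metis (lifting) conj_assoc)

(* x^a - 1 divides x^(a q) - 1: the factorisation of y^q - 1 by y - 1. *)
lemma power_minus_one_dvd:
  fixes x :: nat
  shows "x ^ a - 1 dvd x ^ (a * q) - 1"
proof (cases "x = 0")
  case True
  then show ?thesis by (cases a) (auto simp: power_0_left)
next
  case False
  have "(int x) ^ a - 1 dvd ((int x) ^ a) ^ q - 1"
    using power_diff_1_eq[of "int x ^ a" q] by simp
  hence "int (x ^ a - 1) dvd int (x ^ (a * q) - 1)"
    using False by (simp add: of_nat_diff power_mult)
  thus ?thesis by (simp only: int_dvd_int_iff)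
qed

lemma mersenne_partner:
  assumes "0 < j" "j < k" "j dvd k"
  shows "0 < (2::nat) ^ j - 1 \<and> sylvester_pair (2 ^ j - 1) (2 ^ k - 1)"
proof -
  obtain q where q: "k = j * q" using assms(3) by blast
  have pos: "(1::nat) < 2 ^ j" using assms(1) by (intro one_less_power) simp_all
  have "(2::nat) ^ j < 2 ^ k" using assms(2) by simp
  hence lt: "(2::nat) ^ j - 1 < 2 ^ k - 1" using pos by linarith
  have "(2::nat) ^ j - 1 dvd 2 ^ k - 1" using power_minus_one_dvd[of 2 j q] q by simp
  moreover have "(2::nat) ^ j dvd 2 ^ k" using assms(2) by (simp add: le_imp_power_dvd)
  ultimately show ?thesis using pos lt by (simp add: sylvester_pair_def)
qed

(* Since j \<mapsto> 2^j - 1 is injective, s(2^k - 1) is at least the number of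
   proper divisors of k. *)
lemma s_mersenne_lower:
  "card {j. 0 < j \<and> j < k \<and> j dvd k} \<le> s (2 ^ k - 1)"
proof -
  let ?f = "\<lambda>j::nat. (2::nat) ^ j - 1"
  have "inj ?f"
  proof (rule injI)
    fix a b assume "?f a = ?f b"
    moreover have "(1::nat) \<le> 2 ^ a" "(1::nat) \<le> 2 ^ b" by simp_all
    ultimately have "(2::nat) ^ a = 2 ^ b" by linarith
    thus "a = b" by simp
  qed
  hence "card {j. 0 < j \<and> j < k \<and> j dvd k} = card (?f ` {j. 0 < j \<and> j < k \<and> j dvd k})"
    by (simp add: card_image inj_on_subset)
  also have "\<dots> \<le> card {e. 0 < e \<and> sylvester_pair e (2 ^ k - 1)}"
  proof (rule card_mono)
    show "finite {e. 0 < e \<and> sylvester_pair e (2 ^ k - 1)}"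
      unfolding sylvester_pair_def by auto
    show "?f ` {j. 0 < j \<and> j < k \<and> j dvd k} \<subseteq> {e. 0 < e \<and> sylvester_pair e (2 ^ k - 1)}"
      using mersenne_partner by blast
  qed
  finally show ?thesis by (simp add: s_eq_card_partners)
qed

(* 2^n has the n proper divisors 2^i, i < n. *)
lemma s_double_mersenne_lower: "n \<le> s (2 ^ 2 ^ n - 1)"
proof -
  have "inj_on (\<lambda>i::nat. (2::nat) ^ i) {..<n}" by (simp add: inj_on_def)
  hence "n = card ((\<lambda>i. (2::nat) ^ i) ` {..<n})" by (simp add: card_image)
  also have "\<dots> \<le> card {j. 0 < j \<and> j < 2 ^ n \<and> j dvd (2::nat) ^ n}"
    by (rule card_mono) (auto simp: le_imp_power_dvd)
  also have "\<dots> \<le> s (2 ^ 2 ^ n - 1)" by (rule s_mersenne_lower)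
  finally show ?thesis .
qed

lemma s_unbounded: "\<not> bdd_above (s ` {1..})"
proof
  assume "bdd_above (s ` {1..})"
  then obtain B where B: "\<And>d. 1 \<le> d \<Longrightarrow> s d \<le> B" by (auto simp: bdd_above_def)
  have "(1::nat) < 2 ^ 2 ^ (B + 1)" by (intro one_less_power) simp_all
  hence "s (2 ^ 2 ^ (B + 1) - 1) \<le> B" using B by simp
  with s_double_mersenne_lower[of "B + 1"] show False by simp
qed

lemma sylvester_pair_iff:
  assumes "0 < e"
  shows "sylvester_pair e d \<longleftrightarrow> (\<exists>m. 0 < m \<and> d = e + m * (e * (e + 1)))"
proof
  assume pair: "sylvester_pair e d"
  hence "e < d" and dvd_e: "e dvd d - e" and dvd_e1: "(e + 1) dvd d - e"
    using dvd_diff_nat[of "e + 1" "d + 1" "e + 1"] by (auto simp: sylvester_pair_def dvd_diff_nat)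
  have "e * (e + 1) dvd d - e"
    by (rule divides_mult[OF dvd_e dvd_e1]) simp
  then obtain m where m: "d - e = e * (e + 1) * m" by blast
  with \<open>e < d\<close> have "0 < m" by (cases m) auto
  moreover have "d = e + m * (e * (e + 1))" using m \<open>e < d\<close> by (simp add: mult.commute)
  ultimately show "\<exists>m. 0 < m \<and> d = e + m * (e * (e + 1))" by blast
next
  assume "\<exists>m. 0 < m \<and> d = e + m * (e * (e + 1))"
  then obtain m where m: "0 < m" "d = e + m * (e * (e + 1))" by blast
  have "d + 1 = (e + 1) * (1 + m * e)" using m(2) by (simp add: algebra_simps)
  hence "(e + 1) dvd (d + 1)" by (metis dvd_triv_left)
  moreover have "e < d" "e dvd d" using m assms by simp_all
  ultimately show "sylvester_pair e d" by (simp add: sylvester_pair_def)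
qed

lemma card_partners_upto:
  assumes "0 < e"
  shows "card {d \<in> {1..N}. sylvester_pair e d} = (N - e) div (e * (e + 1))"
proof -
  define M where "M = e * (e + 1)"
  define q where "q = (N - e) div M"
  have M: "0 < M" using assms by (simp add: M_def)
  have bound: "e + m * M \<le> N \<longleftrightarrow> m \<le> q" if "0 < m" for m
  proof
    assume "e + m * M \<le> N"
    hence "m * M div M \<le> (N - e) div M" by (intro div_le_mono) simp
    thus "m \<le> q" using M by (simp add: q_def)
  next
    assume "m \<le> q"
    hence "m * M \<le> q * M" by simp
    also have "\<dots> \<le> N - e" by (simp add: q_def div_times_less_eq_dividend)
    finally have "m * M \<le> N - e" .
    moreover have "0 < m * M" using M \<open>0 < m\<close> by simp
    ultimately show "e + m * M \<le> N" by linarith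
  qed
  have pair: "sylvester_pair e d \<longleftrightarrow> (\<exists>m. 0 < m \<and> d = e + m * M)" for d
    using sylvester_pair_iff[OF assms] by (simp add: M_def)
  have "{d \<in> {1..N}. sylvester_pair e d} = (\<lambda>m. e + m * M) ` {1..q}"
    unfolding pair using bound by (fastforce simp: Suc_le_eq image_iff)
  moreover have "inj_on (\<lambda>m. e + m * M) {1..q}" using M by (simp add: inj_on_def)
  ultimately show ?thesis by (simp add: card_image q_def M_def)
qed

(* Double counting: sum over d of the number of partners e equals the sum over e. *)
lemma S_eq: "S N = (\<Sum>e = 1..N. (N - e) div (e * (e + 1)))"
proof -
  have partners: "{e. 0 < e \<and> sylvester_pair e d} = {e \<in> {1..N}. sylvester_pair e d}"
    if "d \<in> {1..N}" for d
    using that by (auto simp: sylvester_pair_def)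
  have "S N = (\<Sum>d = 1..N. card {e \<in> {1..N}. sylvester_pair e d})"
    unfolding S_def s_eq_card_partners by (rule sum.cong) (simp_all add: partners)
  also have "\<dots> = (\<Sum>d = 1..N. \<Sum>e = 1..N. if sylvester_pair e d then 1 else 0)"
    by (simp add: sum.inter_filter[symmetric])
  also have "\<dots> = (\<Sum>e = 1..N. \<Sum>d = 1..N. if sylvester_pair e d then 1 else 0)"
    by (rule sum.swap)
  also have "\<dots> = (\<Sum>e = 1..N. card {d \<in> {1..N}. sylvester_pair e d})"
    by (simp add: sum.inter_filter[symmetric])
  also have "\<dots> = (\<Sum>e = 1..N. (N - e) div (e * (e + 1)))"
    by (rule sum.cong[OF refl], rule card_partners_upto) simp
  finally show ?thesis .
qed

(* 1/(e(e+1)) = 1/e - 1/(e+1) telescopes. *)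
lemma telescoping_sum: "(\<Sum>e = 1..n. 1 / (real e * (real e + 1))) = 1 - 1 / (real n + 1)"
proof (induction n)
  case 0
  then show ?case by simp
next
  case (Suc n)
  have "(real n + 1) * (real n + 2) \<noteq> 0" by simp
  hence "1 - 1 / (real n + 1) + 1 / ((real n + 1) * (real n + 2)) = 1 - 1 / (real n + 2)"
    by (simp add: divide_simps) (simp add: algebra_simps)
  with Suc show ?case by (simp add: add.commute)
qed

lemma summand_upper:
  "real ((N - e) div (e * (e + 1))) \<le> real N / (real e * (real e + 1))"
proof (cases "e = 0")
  case False
  have "(N - e) div (e * (e + 1)) * (e * (e + 1)) \<le> N"
    using div_times_less_eq_dividend[of "N - e" "e * (e + 1)"] by linarith
  hence "real ((N - e) div (e * (e + 1))) * (real e * (real e + 1)) \<le> real N"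
    by (metis of_nat_le_iff of_nat_mult of_nat_add of_nat_1)
  thus ?thesis using False by (simp add: pos_le_divide_eq del: of_nat_add of_nat_mult)
qed simp

(* ... and, for e \<le> N, falls short of it by less than 2: one unit of rounding
   and at most one unit from the shift by e. *)
lemma summand_lower:
  assumes "0 < e" "e \<le> N"
  shows "real N / (real e * (real e + 1)) - 2 \<le> real ((N - e) div (e * (e + 1)))"
proof -
  define M where "M = e * (e + 1)"
  define q where "q = (N - e) div M"
  have M: "0 < real e * (real e + 1)" using assms by simp
  have "N - e = q * M + (N - e) mod M" by (simp add: q_def)
  moreover have "(N - e) mod M < M" using assms by (simp add: M_def)
  ultimately have "N - e < (q + 1) * M" by simp
  hence "real N - real e < (real q + 1) * (real e * (real e + 1))"
    using assms unfolding M_def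
    by (metis of_nat_less_iff of_nat_mult of_nat_add of_nat_1 of_nat_diff)
  hence "(real N - real e) / (real e * (real e + 1)) < real q + 1"
    using M by (simp only: pos_divide_less_eq)
  hence "real N / (real e * (real e + 1)) - real e / (real e * (real e + 1)) < real q + 1"
    by (simp only: diff_divide_distrib)
  moreover have "real e / (real e * (real e + 1)) \<le> 1" using M by (simp add: divide_le_eq)
  ultimately show ?thesis by (simp add: q_def M_def)
qed

lemma S_upper: "real (S N) \<le> real N"
proof -
  have "real (S N) = (\<Sum>e = 1..N. real ((N - e) div (e * (e + 1))))" by (simp add: S_eq)
  also have "\<dots> \<le> (\<Sum>e = 1..N. real N / (real e * (real e + 1)))"
    by (rule sum_mono, rule summand_upper)
  also have "\<dots> = real N * (\<Sum>e = 1..N. 1 / (real e * (real e + 1)))"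
    by (simp add: sum_distrib_left)
  also have "\<dots> = real N * (1 - 1 / (real N + 1))"
    by (simp only: telescoping_sum)
  also have "\<dots> \<le> real N" by (simp add: field_simps)
  finally show ?thesis .
qed

(* Keep only the summands e \<le> E = floor(sqrt N): the lost mass N/(E+1) and the
   accumulated rounding error 2E are both at most of order sqrt N. *)
lemma S_lower: "real N - 3 * sqrt (real N) \<le> real (S N)"
proof -
  define E where "E = nat \<lfloor>sqrt (real N)\<rfloor>"
  have E_le: "real E \<le> sqrt (real N)" unfolding E_def by simp
  have E_gt: "sqrt (real N) < real E + 1" unfolding E_def by linarith
  have "real E * real E \<le> real N"
    using E_le mult_mono[OF E_le E_le] by simp
  hence "E * E \<le> N" by (simp only: of_nat_mult [symmetric] of_nat_le_iff)
  hence EN: "E \<le> N" by (metis le_square order_trans)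
  have "real N - real N / (real E + 1) - 2 * real E = real N * (1 - 1 / (real E + 1)) - 2 * real E"
    by (simp add: right_diff_distrib)
  also have "\<dots> = real N * (\<Sum>e = 1..E. 1 / (real e * (real e + 1))) - 2 * real E"
    by (simp only: telescoping_sum)
  also have "\<dots> = (\<Sum>e = 1..E. real N / (real e * (real e + 1)) - 2)"
    by (simp add: sum_subtractf sum_distrib_left)
  also have "\<dots> \<le> (\<Sum>e = 1..E. real ((N - e) div (e * (e + 1))))"
    by (rule sum_mono, rule summand_lower) (use EN in auto)
  also have "\<dots> \<le> (\<Sum>e = 1..N. real ((N - e) div (e * (e + 1))))"
    by (rule sum_mono2) (use EN in auto)
  also have "\<dots> = real (S N)" by (simp add: S_eq)
  finally have A: "real N - real N / (real E + 1) - 2 * real E \<le> real (S N)" .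
  have "real N = sqrt (real N) * sqrt (real N)" by simp
  also have "\<dots> \<le> sqrt (real N) * (real E + 1)" using E_gt by (intro mult_left_mono) auto
  finally have "real N / (real E + 1) \<le> sqrt (real N)" by (simp add: field_simps)
  with A E_le show ?thesis by linarith
qed

theorem theorem4p5:
  shows "(\<lambda>N. real (S N) - real N) \<in> O[at_top](\<lambda>N. sqrt (real N))
         \<and> \<not> bdd_above (s ` {1..})"
proof
  have "\<bar>real (S N) - real N\<bar> \<le> 3 * sqrt (real N)" for N
    using S_upper[of N] S_lower[of N] by simp
  thus "(\<lambda>N. real (S N) - real N) \<in> O[at_top](\<lambda>N. sqrt (real N))"
    by (intro bigoI[where c = 3] always_eventually) simp
  show "\<not> bdd_above (s ` {1..})" by (rule s_unbounded)
qed

end
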